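(* Let $\nu\ge3$ be a square-free integer with $\nu\equiv2$ or $3\pmod 4$, and for $n\ge1$ let $P_n(t)=(t^2-\nu)^{\circ n}\in\mathbb{Z}[t]$ (the $n$-fold composition of $t^2-\nu$). Write $C_n$ for the constant term of $P_n$ and $D_n$ for the coefficient of $t^2$ in $P_n$. For an integer $k$, let $s(k)$ be the set of primes dividing $k$. Then for every $n\ge2$, $\bigcup_{1\le k\le n} s(C_k)= s(D_{n+1})$. *)

theory Defs
  imports "HOL-Computational_Algebra.Polynomial" "HOL-Computational_Algebra.Squarefree"
          "HOL-Computational_Algebra.Primes"
begin

primrec iterP :: "int \<Rightarrow> nat \<Rightarrow> int poly" where
  "iterP nu 0 = [:0, 1:]"
| "iterP nu (Suc n) = pcompose [:-nu, 0, 1:] (iterP nu n)"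

definition constC :: "int \<Rightarrow> nat \<Rightarrow> int" where
  "constC nu n = coeff (iterP nu n) 0"

definition quadD :: "int \<Rightarrow> nat \<Rightarrow> int" where
  "quadD nu n = coeff (iterP nu n) 2"

definition primeset :: "int \<Rightarrow> int set" where
  "primeset k = {p. prime p \<and> p dvd k}"

end

theory Submission
  imports Defs
begin

text \<open>
  Squaring a polynomial whose linear coefficient vanishes doubles the product of its constant
  and quadratic coefficients, so from \<open>P\<^sub>n\<^sub>+\<^sub>1 = P\<^sub>n\<^sup>2 - \<nu>\<close> one gets
  \<open>D\<^sub>n\<^sub>+\<^sub>1 = 2\<^sup>n C\<^sub>1 \<cdots> C\<^sub>n\<close>. The extra prime 2 is already among
  the divisors of \<open>C\<^sub>2 = \<nu>\<^sup>2 - \<nu>\<close>.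
\<close>

lemma iterP_Suc_square: "iterP nu (Suc n) = iterP nu n ^ 2 - [:nu:]"
  by (simp add: pcompose_pCons power2_eq_square algebra_simps)

declare iterP.simps(2) [simp del]

lemma coeff_square_0: "coeff (p ^ 2) 0 = coeff p 0 ^ 2"
  for p :: "'a::comm_semiring_1 poly"
  by (simp add: power2_eq_square coeff_mult)

lemma coeff_square_1: "coeff (p ^ 2) 1 = 2 * coeff p 0 * coeff p 1"
  for p :: "'a::comm_semiring_1 poly"
  by (simp add: power2_eq_square coeff_mult atMost_Suc algebra_simps mult_2)

lemma coeff_square_2: "coeff (p ^ 2) 2 = 2 * coeff p 0 * coeff p 2 + coeff p 1 ^ 2"
  for p :: "'a::comm_semiring_1 poly"
  by (simp add: power2_eq_square coeff_mult numeral_2_eq_2 atMost_Suc algebra_simps mult_2)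

lemma constC_Suc: "constC nu (Suc n) = constC nu n ^ 2 - nu"
  by (simp add: constC_def iterP_Suc_square coeff_square_0)

lemma coeff_iterP_Suc_1: "coeff (iterP nu (Suc n)) 1 = 0"
proof (induction n)
  case 0
  show ?case
    by (simp add: iterP_Suc_square power2_eq_square)
next
  case (Suc n)
  have "coeff [:nu:] 1 = 0"
    by simp
  with Suc show ?case
    by (metis iterP_Suc_square coeff_diff coeff_square_1 mult_zero_right diff_zero)
qed

lemma quadD_Suc_Suc: "quadD nu (Suc (Suc n)) = 2 * constC nu (Suc n) * quadD nu (Suc n)"
proof -
  have "coeff [:nu:] 2 = 0"
    by (simp add: numeral_2_eq_2)
  then show ?thesis
    unfolding quadD_def constC_def iterP_Suc_square[of nu "Suc n"]
    by (simp add: coeff_square_2 coeff_iterP_Suc_1 del: One_nat_def)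
qed

lemma quadD_Suc: "quadD nu (Suc n) = 2 ^ n * (\<Prod>k\<in>{1..n}. constC nu k)"
proof (induction n)
  case 0
  show ?case
    by (simp add: quadD_def iterP_Suc_square coeff_square_2 numeral_2_eq_2)
next
  case (Suc n)
  then show ?case
    by (simp add: quadD_Suc_Suc prod.cl_ivl_Suc mult_ac)
qed

lemma even_constC_2: "2 dvd constC nu 2"
proof -
  have "constC nu 2 = nu * (nu - 1)"
    using constC_Suc[of nu 1] constC_Suc[of nu 0]
    by (simp add: constC_def numeral_2_eq_2 power2_eq_square algebra_simps)
  then show ?thesis
    by simp
qed

lemma primeset_mult: "primeset (a * b) = primeset a \<union> primeset b"
  by (auto simp: primeset_def prime_dvd_mult_iff)

lemma primeset_power: "n > 0 \<Longrightarrow> primeset (a ^ n) = primeset a"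
  by (auto simp: primeset_def prime_dvd_power_iff)

lemma primeset_prod: "finite A \<Longrightarrow> primeset (\<Prod>k\<in>A. f k) = (\<Union>k\<in>A. primeset (f k))"
  by (auto simp: primeset_def prime_dvd_prod_iff)

lemma primeset_2: "primeset 2 = {2}"
  by (auto simp: primeset_def primes_dvd_imp_eq)

theorem lemma4p5:
  fixes nu :: int and n :: nat
  assumes "nu \<ge> 3" and "squarefree nu" and "nu mod 4 = 2 \<or> nu mod 4 = 3"
    and "n \<ge> 2"
  shows "(\<Union>k\<in>{1..n}. primeset (constC nu k)) = primeset (quadD nu (Suc n))"
proof -
  have "2 \<in> primeset (constC nu 2)"
    by (simp add: primeset_def even_constC_2)
  then have "2 \<in> (\<Union>k\<in>{1..n}. primeset (constC nu k))"
    using \<open>n \<ge> 2\<close> by force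
  moreover have "primeset (quadD nu (Suc n)) = {2} \<union> (\<Union>k\<in>{1..n}. primeset (constC nu k))"
    using \<open>n \<ge> 2\<close> by (simp add: quadD_Suc primeset_mult primeset_power primeset_prod primeset_2)
  ultimately show ?thesis
    by blast
qed

end
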